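(* Let $X$ and $Y$ be real Banach spaces with $Y\neq\{0\}$. Then the adjoint $(\beta_X^Y)^*:X^*\to F_Y(X)^*$ is an isometry.
   Context: $Lip_0(X,Y)$ is the Banach space of Lipschitz maps $f:X\to Y$ with $f(0)=0$ and norm $Lip(f)=\sup_{x\neq y}\|f(x)-f(y)\|/\|x-y\|$. For $x\in X$, $\delta_x^Y\in L(Lip_0(X,Y),Y)$ is evaluation $\delta_x^Y(f)=f(x)$. $F_Y(X)$ is the norm-closed linear span of $\{\delta_x^Y:x\in X\}$ in $L(Lip_0(X,Y),Y)$. $\beta_X^Y:F_Y(X)\to X$ is the bounded linear contraction given on finite combinations by $\beta_X^Y(\sum_{i}\alpha_i\delta_{x_i}^Y)=\sum_i\alpha_ix_i$ and extended by continuity. *)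

theory Defs
  imports "HOL-Analysis.Analysis"
begin

definition lip0 :: "('a::real_normed_vector \<Rightarrow> 'b::real_normed_vector) set" where
  "lip0 = {f. f 0 = 0 \<and> (\<exists>C. C-lipschitz_on UNIV f)}"

definition lipball :: "('a::real_normed_vector \<Rightarrow> 'b::real_normed_vector) set" where
  "lipball = {f. f 0 = 0 \<and> 1-lipschitz_on UNIV f}"

text \<open>Elements of L(Lip_0(X,Y),Y): bounded linear operators on Lip_0(X,Y),
  represented as functions on all maps X \<Rightarrow> Y which vanish outside Lip_0(X,Y).\<close>
definition lip_op :: "(('a::real_normed_vector \<Rightarrow> 'b::real_normed_vector) \<Rightarrow> 'b) \<Rightarrow> bool" where
  "lip_op \<mu> \<longleftrightarrow> (\<forall>f. f \<notin> lip0 \<longrightarrow> \<mu> f = 0)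
     \<and> (\<forall>f\<in>lip0. \<forall>g\<in>lip0. \<mu> (\<lambda>x. f x + g x) = \<mu> f + \<mu> g)
     \<and> (\<forall>c. \<forall>f\<in>lip0. \<mu> (\<lambda>x. c *\<^sub>R f x) = c *\<^sub>R \<mu> f)
     \<and> (\<exists>B. \<forall>f\<in>lipball. norm (\<mu> f) \<le> B)"

definition opnorm :: "(('a::real_normed_vector \<Rightarrow> 'b::real_normed_vector) \<Rightarrow> 'b) \<Rightarrow> real" where
  "opnorm \<mu> = (SUP f\<in>lipball. norm (\<mu> f))"

definition delta :: "'a::real_normed_vector \<Rightarrow> ('a \<Rightarrow> 'b::real_normed_vector) \<Rightarrow> 'b" where
  "delta x = (\<lambda>f. if f \<in> lip0 then f x else 0)"

definition fspan :: "((('a::real_normed_vector \<Rightarrow> 'b::real_normed_vector) \<Rightarrow> 'b)) set" where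
  "fspan = {\<mu>. \<exists>n (\<alpha>::nat \<Rightarrow> real) (xs::nat \<Rightarrow> 'a).
              \<mu> = (\<lambda>f. \<Sum>i<n. \<alpha> i *\<^sub>R delta (xs i) f)}"

definition FY :: "((('a::real_normed_vector \<Rightarrow> 'b::real_normed_vector) \<Rightarrow> 'b)) set" where
  "FY = {\<mu>. lip_op \<mu> \<and> (\<exists>s. (\<forall>n. s n \<in> fspan) \<and>
              (\<lambda>n. opnorm (\<lambda>f. \<mu> f - s n f)) \<longlonglongrightarrow> 0)}"

definition beta0 :: "(('a::real_normed_vector \<Rightarrow> 'b::real_normed_vector) \<Rightarrow> 'b) \<Rightarrow> 'a" where
  "beta0 \<mu> = (THE x. \<exists>n (\<alpha>::nat \<Rightarrow> real) xs.
              \<mu> = (\<lambda>f. \<Sum>i<n. \<alpha> i *\<^sub>R delta (xs i) f) \<and> x = (\<Sum>i<n. \<alpha> i *\<^sub>R xs i))"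

definition beta :: "(('a::real_normed_vector \<Rightarrow> 'b::real_normed_vector) \<Rightarrow> 'b) \<Rightarrow> 'a" where
  "beta \<mu> = (THE x. \<forall>s. ((\<forall>n. s n \<in> fspan) \<and> (\<lambda>n. opnorm (\<lambda>f. \<mu> f - s n f)) \<longlonglongrightarrow> 0)
                  \<longrightarrow> (\<lambda>n. beta0 (s n)) \<longlonglongrightarrow> x)"

end

theory Submission
  imports Defs
begin

(* For a finite combination \<nu> = \<Sum> \<alpha>_i \<delta>_{x_i} let z = \<Sum> \<alpha>_i x_i. A Hahn-Banach functional
   norming z on the finite-dimensional span of z and the x_i, extended to X by McShane's formula
   and multiplied by a unit vector of Y, is a map f in the unit ball of Lip_0(X,Y) that is linear
   on that span, so norm (\<nu> f) = norm z. Hence \<beta> is well defined and contractive on the span of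
   the evaluations, and by continuity on F_Y(X). Since opnorm \<delta>_x \<le> norm x and \<beta> \<delta>_x = x,
   \<beta> maps the unit ball of F_Y(X) onto the unit ball of X, over which the supremum of |\<phi>| is
   norm \<phi>. *)

definition linear_on :: "'a::real_vector set \<Rightarrow> ('a \<Rightarrow> 'b::real_vector) \<Rightarrow> bool" where
  "linear_on W f \<longleftrightarrow>
     (\<forall>v\<in>W. \<forall>w\<in>W. f (v + w) = f v + f w) \<and> (\<forall>v\<in>W. \<forall>c. f (c *\<^sub>R v) = c *\<^sub>R f v)"

definition norm_dominated_linear_on :: "'a::real_normed_vector set \<Rightarrow> ('a \<Rightarrow> real) \<Rightarrow> bool" where
  "norm_dominated_linear_on W g \<longleftrightarrow> linear_on W g \<and> (\<forall>v\<in>W. g v \<le> norm v)"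

lemma linear_on_add: "linear_on W f \<Longrightarrow> v \<in> W \<Longrightarrow> w \<in> W \<Longrightarrow> f (v + w) = f v + f w"
  unfolding linear_on_def by blast

lemma linear_on_scaleR: "linear_on W f \<Longrightarrow> v \<in> W \<Longrightarrow> f (c *\<^sub>R v) = c *\<^sub>R f v"
  unfolding linear_on_def by blast

lemma linear_on_zero: "linear_on W f \<Longrightarrow> 0 \<in> W \<Longrightarrow> f 0 = 0"
  using linear_on_scaleR[of W f 0 0] by simp

lemma linear_on_diff:
  assumes "linear_on W f" "subspace W" "v \<in> W" "w \<in> W"
  shows "f (v - w) = f v - f w"
  using assms linear_on_add[of W f "v - w" w] by (simp add: subspace_diff eq_diff_eq)

lemma linear_on_sum:
  assumes f: "linear_on W f" and W: "subspace W"
  shows "finite I \<Longrightarrow> (\<And>i. i \<in> I \<Longrightarrow> v i \<in> W) \<Longrightarrow>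
    f (\<Sum>i\<in>I. a i *\<^sub>R v i) = (\<Sum>i\<in>I. a i *\<^sub>R f (v i))"
proof (induction I rule: finite_induct)
  case empty
  then show ?case using linear_on_zero[OF f] W by (simp add: subspace_0)
next
  case (insert i I)
  then have "(\<Sum>j\<in>I. a j *\<^sub>R v j) \<in> W" "a i *\<^sub>R v i \<in> W"
    using W by (auto intro: subspace_sum subspace_scale)
  then show ?case using insert linear_on_add[OF f] linear_on_scaleR[OF f] by simp
qed

lemma norm_dominated_linear_on_abs:
  assumes "norm_dominated_linear_on W g" "subspace W" "v \<in> W"
  shows "\<bar>g v\<bar> \<le> norm v"
proof -
  have "g (- v) = - g v"
    using assms linear_on_scaleR[of W g v "- 1"] by (simp add: norm_dominated_linear_on_def)
  moreover have "g v \<le> norm v" "g (- v) \<le> norm (- v)"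
    using assms subspace_neg[of W v] by (auto simp: norm_dominated_linear_on_def)
  ultimately show ?thesis by simp
qed

lemma norm_dominated_linear_on_extend_by:
  assumes W: "subspace W" and g: "norm_dominated_linear_on W g" and u: "u \<notin> W"
    and dominated: "\<And>w t. w \<in> W \<Longrightarrow> g w + t * c \<le> norm (w + t *\<^sub>R u)"
  shows "\<exists>g'. norm_dominated_linear_on (span (insert u W)) g' \<and>
    (\<forall>w\<in>W. \<forall>t. g' (w + t *\<^sub>R u) = g w + t * c)"
proof -
  have g_linear: "linear_on W g" using g by (simp add: norm_dominated_linear_on_def)
  have coord_unique: "s = t" if "w + s *\<^sub>R u = w' + t *\<^sub>R u" "w \<in> W" "w' \<in> W" for w w' s t
  proof (rule ccontr)
    assume "s \<noteq> t"
    have "(s - t) *\<^sub>R u = w' - w" using that(1) by (simp add: algebra_simps)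
    then have "(1 / (s - t)) *\<^sub>R ((s - t) *\<^sub>R u) \<in> W"
      using W that(2,3) by (simp add: subspace_diff subspace_scale)
    with \<open>s \<noteq> t\<close> u show False by simp
  qed
  define coord where "coord x = (SOME t. x - t *\<^sub>R u \<in> W)" for x
  have coord: "coord (w + t *\<^sub>R u) = t" if "w \<in> W" for w t
  proof -
    have "\<exists>s. w + t *\<^sub>R u - s *\<^sub>R u \<in> W" using that by (intro exI[of _ t]) simp
    then have "w + t *\<^sub>R u - coord (w + t *\<^sub>R u) *\<^sub>R u \<in> W"
      unfolding coord_def by (rule someI_ex)
    then show ?thesis
      using coord_unique[of "w + t *\<^sub>R u - coord (w + t *\<^sub>R u) *\<^sub>R u"] that by fastforce
  qed
  define g' where "g' x = g (x - coord x *\<^sub>R u) + coord x * c" for x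
  have g': "g' (w + t *\<^sub>R u) = g w + t * c" if "w \<in> W" for w t
    using coord[OF that] by (simp add: g'_def)
  have span_eq: "span (insert u W) = {w + t *\<^sub>R u | w t. w \<in> W}"
  proof -
    have "span W = W" using W by simp
    then show ?thesis
      by (auto simp: span_insert simp del: span_eq_iff)
        (metis diff_add_cancel, metis add_diff_cancel)
  qed
  have "norm_dominated_linear_on (span (insert u W)) g'"
    unfolding norm_dominated_linear_on_def linear_on_def span_eq
  proof safe
    fix w1 t1 w2 t2 assume "w1 \<in> W" "w2 \<in> W"
    then show "g' (w1 + t1 *\<^sub>R u + (w2 + t2 *\<^sub>R u)) = g' (w1 + t1 *\<^sub>R u) + g' (w2 + t2 *\<^sub>R u)"
      using g' g'[of "w1 + w2" "t1 + t2"] W linear_on_add[OF g_linear]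
      by (simp add: subspace_add algebra_simps)
  next
    fix w t d assume "w \<in> W"
    then show "g' (d *\<^sub>R (w + t *\<^sub>R u)) = d *\<^sub>R g' (w + t *\<^sub>R u)"
      using g' g'[of "d *\<^sub>R w" "d * t"] W linear_on_scaleR[OF g_linear]
      by (simp add: subspace_scale algebra_simps)
  next
    fix w t assume "w \<in> W"
    then show "g' (w + t *\<^sub>R u) \<le> norm (w + t *\<^sub>R u)" using g' dominated by simp
  qed
  then show ?thesis using g' by blast
qed

lemma norm_dominated_linear_on_extend:
  assumes W: "subspace W" and g: "norm_dominated_linear_on W g"
  shows "\<exists>g'. norm_dominated_linear_on (span (insert u W)) g' \<and> (\<forall>w\<in>W. g' w = g w)"
proof (cases "u \<in> W")
  case True
  then have "span (insert u W) = W" using W by (simp add: insert_absorb)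
  then show ?thesis using g by auto
next
  case False
  have g_linear: "linear_on W g" using g by (simp add: norm_dominated_linear_on_def)
  have "g w1 - norm (w1 - u) \<le> norm (w2 + u) - g w2" if "w1 \<in> W" "w2 \<in> W" for w1 w2
  proof -
    have "g w1 + g w2 = g (w1 + w2)" using linear_on_add[OF g_linear that] by simp
    also have "\<dots> \<le> norm (w1 + w2)"
      using g that W by (simp add: norm_dominated_linear_on_def subspace_add)
    also have "\<dots> \<le> norm (w1 - u) + norm (w2 + u)"
      using norm_triangle_ineq[of "w1 - u" "w2 + u"] by simp
    finally show ?thesis by simp
  qed
  moreover define c where "c = (SUP w\<in>W. g w - norm (w - u))"
  moreover have "W \<noteq> {}" using W subspace_0 by blast
  ultimately have lower: "g w - norm (w - u) \<le> c" and upper: "c \<le> norm (w + u) - g w"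
    if "w \<in> W" for w
    using that by (auto intro!: cSUP_upper cSUP_least bdd_aboveI2)
  \<comment> \<open>after rescaling by |t|, dominance on the line w + t u is this bound\<close>
  have bound: "\<bar>g w + c\<bar> \<le> norm (w + u)" if "w \<in> W" for w
    using lower[of "- w"] upper[OF that] that W linear_on_scaleR[OF g_linear that, of "- 1"]
    by (simp add: subspace_neg norm_minus_commute abs_le_iff add.commute)
  have "g w + t * c \<le> norm (w + t *\<^sub>R u)" if w: "w \<in> W" for w t
  proof (cases "t = 0")
    case True
    then show ?thesis using g w by (simp add: norm_dominated_linear_on_def)
  next
    case False
    define w' where "w' = (1 / t) *\<^sub>R w"
    have w': "w' \<in> W" using W w by (simp add: w'_def subspace_scale)
    have w_eq: "w = t *\<^sub>R w'" using False by (simp add: w'_def)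
    have "g w + t * c = t * (g w' + c)"
      using linear_on_scaleR[OF g_linear w'] w_eq by (simp add: algebra_simps)
    also have "\<dots> \<le> \<bar>t\<bar> * \<bar>g w' + c\<bar>" by (simp flip: abs_mult)
    also have "\<dots> \<le> \<bar>t\<bar> * norm (w' + u)" using bound[OF w'] by (simp add: mult_left_mono)
    also have "\<dots> = norm (w + t *\<^sub>R u)" by (simp add: w_eq scaleR_add_right[symmetric])
    finally show ?thesis .
  qed
  from norm_dominated_linear_on_extend_by[OF W g False this] obtain g' where
    "norm_dominated_linear_on (span (insert u W)) g'" "\<forall>w\<in>W. \<forall>t. g' (w + t *\<^sub>R u) = g w + t * c"
    by blast
  then show ?thesis by (metis add.right_neutral mult_zero_left scaleR_zero_left)
qed

lemma norm_dominated_linear_on_extend_finite: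
  assumes "finite S" and W: "subspace W" and g: "norm_dominated_linear_on W g"
  shows "\<exists>g'. norm_dominated_linear_on (span (S \<union> W)) g' \<and> (\<forall>w\<in>W. g' w = g w)"
  using assms(1)
proof (induction S rule: finite_induct)
  case empty
  have "span W = W" using W by simp
  then show ?case using g by (metis sup_bot_left)
next
  case (insert x S)
  then obtain g1 where g1: "norm_dominated_linear_on (span (S \<union> W)) g1" "\<forall>w\<in>W. g1 w = g w"
    by blast
  obtain g2 where g2: "norm_dominated_linear_on (span (insert x (span (S \<union> W)))) g2"
    "\<forall>w\<in>span (S \<union> W). g2 w = g1 w"
    using norm_dominated_linear_on_extend[OF subspace_span g1(1)] by blast
  have "span (insert x (span (S \<union> W))) = span (insert x S \<union> W)"
    by (simp add: span_insert span_span)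
  moreover have "\<forall>w\<in>W. g2 w = g w" using g1(2) g2(2) span_superset[of "S \<union> W"] by auto
  ultimately show ?case using g2(1) by auto
qed

lemma exists_norming_functional_on_finite_span:
  fixes z :: "'a::real_normed_vector"
  assumes "finite S"
  shows "\<exists>g. norm_dominated_linear_on (span (insert z S)) g \<and> g z = norm z"
proof (cases "z = 0")
  case True
  then show ?thesis by (intro exI[of _ "\<lambda>_. 0"]) (simp add: norm_dominated_linear_on_def linear_on_def)
next
  case False
  have zero: "norm_dominated_linear_on {0} (\<lambda>_. 0)"
    by (simp add: norm_dominated_linear_on_def linear_on_def)
  obtain g0 where g0: "norm_dominated_linear_on (span (insert z {0})) g0"
    "\<forall>t. g0 (t *\<^sub>R z) = t * norm z"
    using norm_dominated_linear_on_extend_by[OF subspace_single_0 zero, of z "norm z"] False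
    by (auto simp: mult_right_mono)
  obtain g where g: "norm_dominated_linear_on (span (S \<union> span (insert z {0}))) g"
    "\<forall>w\<in>span (insert z {0}). g w = g0 w"
    using norm_dominated_linear_on_extend_finite[OF assms subspace_span g0(1)] by blast
  have "span (S \<union> span (insert z {0})) = span (S \<union> insert z {0})"
    by (simp only: span_Un span_span)
  also have "\<dots> = span (insert z S)"
    using span_insert_0[of "insert z S"] by (simp add: insert_commute)
  moreover have "g z = norm z" using g(2) g0(2)[rule_format, of 1] by (simp add: span_base)
  ultimately show ?thesis using g(1) by auto
qed

lemma norm_dominated_linear_on_Lipschitz_extension:
  assumes W: "subspace W" and g: "norm_dominated_linear_on W g"
  shows "\<exists>h. 1-lipschitz_on UNIV h \<and> (\<forall>v\<in>W. h v = g v)"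
proof -
  define h where "h x = (INF v\<in>W. g v + norm (x - v))" for x
  have W_ne: "W \<noteq> {}" using W subspace_0 by blast
  have "- norm x \<le> g v + norm (x - v)" if "v \<in> W" for x v
    using norm_dominated_linear_on_abs[OF g W that] norm_triangle_ineq2[of v x]
    by (simp add: norm_minus_commute)
  then have h_le: "h x \<le> g v + norm (x - v)" if "v \<in> W" for x v
    unfolding h_def using that by (intro cINF_lower bdd_belowI2) auto
  have h_lip: "h x \<le> h y + norm (x - y)" for x y
  proof -
    have "h x - norm (x - y) \<le> g v + norm (y - v)" if "v \<in> W" for v
      using h_le[OF that, of x] norm_triangle_ineq[of "x - y" "y - v"] by simp
    then have "h x - norm (x - y) \<le> h y"
      unfolding h_def[of y] using W_ne by (intro cINF_greatest) auto
    then show ?thesis by simp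
  qed
  have "1-lipschitz_on UNIV h"
  proof (rule lipschitz_onI)
    fix x y :: 'a
    show "dist (h x) (h y) \<le> 1 * dist x y"
      using h_lip[of x y] h_lip[of y x] by (simp add: dist_real_def dist_norm norm_minus_commute)
  qed simp
  moreover have "h v = g v" if v: "v \<in> W" for v
  proof (rule antisym)
    show "h v \<le> g v" using h_le[OF v, of v] by simp
    have "g v \<le> g w + norm (v - w)" if "w \<in> W" for w
      using linear_on_diff[OF _ W v that, of g] g subspace_diff[OF W v that]
      by (auto simp: norm_dominated_linear_on_def)
    then show "g v \<le> h v" unfolding h_def using W_ne by (intro cINF_greatest) auto
  qed
  ultimately show ?thesis by blast
qed

lemma lipball_imp_lip0: "f \<in> lipball \<Longrightarrow> f \<in> lip0"
  unfolding lipball_def lip0_def by blast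

lemma lipball_norm_le: "f \<in> lipball \<Longrightarrow> norm (f x) \<le> norm x"
  unfolding lipball_def using lipschitz_onD[of 1 UNIV f x 0] by (auto simp: dist_norm)

lemma zero_in_lipball: "(\<lambda>_. 0) \<in> lipball"
  unfolding lipball_def by (auto intro: lipschitz_onI)

lemma delta_lipball: "f \<in> lipball \<Longrightarrow> delta x f = f x"
  unfolding delta_def using lipball_imp_lip0 by auto

definition delta_comb ::
    "nat \<Rightarrow> (nat \<Rightarrow> real) \<Rightarrow> (nat \<Rightarrow> 'a::real_normed_vector) \<Rightarrow> ('a \<Rightarrow> 'b::real_normed_vector) \<Rightarrow> 'b" where
  "delta_comb n \<alpha> xs = (\<lambda>f. \<Sum>i<n. \<alpha> i *\<^sub>R delta (xs i) f)"

lemma fspan_iff_delta_comb: "\<nu> \<in> fspan \<longleftrightarrow> (\<exists>n \<alpha> xs. \<nu> = delta_comb n \<alpha> xs)"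
  unfolding fspan_def delta_comb_def by blast

lemma delta_comb_lipball: "f \<in> lipball \<Longrightarrow> delta_comb n \<alpha> xs f = (\<Sum>i<n. \<alpha> i *\<^sub>R f (xs i))"
  unfolding delta_comb_def by (simp add: delta_lipball)

lemma exists_lipball_linear_on_finite_span:
  fixes y0 :: "'b::real_normed_vector"
  assumes "y0 \<noteq> 0" and "finite S"
  shows "\<exists>f::'a::real_normed_vector \<Rightarrow> 'b.
    f \<in> lipball \<and> linear_on (span (insert z S)) f \<and> norm (f z) = norm z"
proof -
  define W where "W = span (insert z S)"
  have W: "subspace W" unfolding W_def by simp
  obtain g where g: "norm_dominated_linear_on W g" "g z = norm z"
    using exists_norming_functional_on_finite_span[OF assms(2)] unfolding W_def by blast
  obtain h where h: "1-lipschitz_on UNIV h" "\<forall>v\<in>W. h v = g v"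
    using norm_dominated_linear_on_Lipschitz_extension[OF W g(1)] by blast
  define e where "e = (1 / norm y0) *\<^sub>R y0"
  have e: "norm e = 1" using assms(1) by (simp add: e_def)
  define f where "f x = h x *\<^sub>R e" for x
  have "h 0 = 0"
    using h(2) subspace_0[OF W] linear_on_zero[of W g] g(1)
    by (simp add: norm_dominated_linear_on_def)
  moreover have "dist (f x) (f y) \<le> 1 * dist x y" for x y
    using lipschitz_onD[OF h(1), of x y]
    by (simp add: f_def dist_norm e dist_real_def flip: scaleR_diff_left)
  ultimately have "f \<in> lipball" unfolding lipball_def by (auto simp: f_def intro: lipschitz_onI)
  moreover have "linear_on W f"
    using g(1) h(2) W
    by (auto simp: linear_on_def norm_dominated_linear_on_def f_def subspace_add subspace_scale
        scaleR_add_left)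
  moreover have "norm (f z) = norm z"
    using h(2) g(2) e by (simp add: f_def W_def span_base)
  ultimately show ?thesis unfolding W_def by blast
qed

lemma delta_comb_diff_norm_attained:
  fixes y0 :: "'b::real_normed_vector"
  assumes "y0 \<noteq> 0"
  shows "\<exists>f\<in>(lipball :: ('a::real_normed_vector \<Rightarrow> 'b) set).
    norm (delta_comb n \<alpha> xs f - delta_comb m \<beta> ys f) =
    norm ((\<Sum>i<n. \<alpha> i *\<^sub>R xs i) - (\<Sum>j<m. \<beta> j *\<^sub>R ys j))"
proof -
  define x where "x = (\<Sum>i<n. \<alpha> i *\<^sub>R xs i)"
  define y where "y = (\<Sum>j<m. \<beta> j *\<^sub>R ys j)"
  define S where "S = xs ` {..<n} \<union> ys ` {..<m}"
  define W where "W = span (insert (x - y) S)"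
  obtain f :: "'a \<Rightarrow> 'b" where f: "f \<in> lipball" "linear_on W f" "norm (f (x - y)) = norm (x - y)"
    using exists_lipball_linear_on_finite_span[OF assms, of S "x - y"] unfolding W_def S_def by blast
  have W: "subspace W" unfolding W_def by simp
  have xs: "xs i \<in> W" if "i < n" for i unfolding W_def S_def using that by (simp add: span_base)
  have ys: "ys j \<in> W" if "j < m" for j unfolding W_def S_def using that by (simp add: span_base)
  have "delta_comb n \<alpha> xs f - delta_comb m \<beta> ys f = f x - f y"
    using linear_on_sum[OF f(2) W, of "{..<n}" xs \<alpha>] linear_on_sum[OF f(2) W, of "{..<m}" ys \<beta>] xs ys
    by (simp add: delta_comb_lipball[OF f(1)] x_def y_def)
  also have "\<dots> = f (x - y)"
    using xs ys W unfolding x_def y_def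
    by (intro linear_on_diff[OF f(2) W, symmetric] subspace_sum subspace_scale) auto
  finally have "norm (delta_comb n \<alpha> xs f - delta_comb m \<beta> ys f) = norm (x - y)"
    using f(3) by simp
  then show ?thesis using f(1) unfolding x_def y_def by blast
qed

definition lipball_bounded :: "(('a::real_normed_vector \<Rightarrow> 'b::real_normed_vector) \<Rightarrow> 'b) \<Rightarrow> bool" where
  "lipball_bounded \<nu> \<longleftrightarrow> (\<exists>B. \<forall>f\<in>lipball. norm (\<nu> f) \<le> B)"

lemma norm_le_opnorm: "lipball_bounded \<nu> \<Longrightarrow> f \<in> lipball \<Longrightarrow> norm (\<nu> f) \<le> opnorm \<nu>"
  unfolding opnorm_def lipball_bounded_def by (rule cSUP_upper) (auto simp: bdd_above_def)

lemma opnorm_le: "(\<And>f. f \<in> lipball \<Longrightarrow> norm (\<nu> f) \<le> B) \<Longrightarrow> opnorm \<nu> \<le> B"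
  unfolding opnorm_def using zero_in_lipball by (intro cSUP_least) auto

lemma opnorm_zero: "opnorm (\<lambda>f::'a::real_normed_vector \<Rightarrow> 'b::real_normed_vector. 0 :: 'b) = 0"
  unfolding opnorm_def using zero_in_lipball by (subst cSUP_const) auto

lemma lip0_add: "f \<in> lip0 \<Longrightarrow> g \<in> lip0 \<Longrightarrow> (\<lambda>x. f x + g x) \<in> lip0"
  unfolding lip0_def by (auto intro: lipschitz_on_add)

lemma lip0_scaleR: "f \<in> lip0 \<Longrightarrow> (\<lambda>x. c *\<^sub>R f x) \<in> lip0"
  unfolding lip0_def by (auto intro: lipschitz_on_cmult)

lemma opnorm_delta_le: "opnorm (delta x :: ('a::real_normed_vector \<Rightarrow> 'b::real_normed_vector) \<Rightarrow> 'b) \<le> norm x"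
  using delta_lipball lipball_norm_le by (intro opnorm_le) fastforce

lemma lip_op_delta: "lip_op (delta x :: ('a::real_normed_vector \<Rightarrow> 'b::real_normed_vector) \<Rightarrow> 'b)"
  unfolding lip_op_def
proof (intro conjI)
  show "\<exists>B. \<forall>f\<in>lipball. norm (delta x f :: 'b) \<le> B"
    using delta_lipball lipball_norm_le by fastforce
qed (auto simp: delta_def lip0_add lip0_scaleR)

lemma lipball_bounded_diff:
  "lipball_bounded \<mu> \<Longrightarrow> lipball_bounded \<nu> \<Longrightarrow> lipball_bounded (\<lambda>f. \<mu> f - \<nu> f)"
  unfolding lipball_bounded_def by (meson add_mono norm_triangle_ineq4 order_trans)

lemma lip_op_lipball_bounded: "lip_op \<mu> \<Longrightarrow> lipball_bounded \<mu>"
  unfolding lip_op_def lipball_bounded_def by blast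

lemma fspan_lipball_bounded: "\<nu> \<in> fspan \<Longrightarrow> lipball_bounded \<nu>"
proof -
  assume "\<nu> \<in> fspan"
  then obtain n \<alpha> xs where \<nu>: "\<nu> = delta_comb n \<alpha> xs" by (auto simp: fspan_iff_delta_comb)
  have "norm (\<nu> f) \<le> (\<Sum>i<n. \<bar>\<alpha> i\<bar> * norm (xs i))" if f: "f \<in> lipball" for f
  proof -
    have "norm (\<nu> f) \<le> (\<Sum>i<n. norm (\<alpha> i *\<^sub>R f (xs i)))"
      unfolding \<nu> delta_comb_lipball[OF f] by (rule norm_sum)
    also have "\<dots> \<le> (\<Sum>i<n. \<bar>\<alpha> i\<bar> * norm (xs i))"
      using lipball_norm_le[OF f] by (intro sum_mono) (simp add: mult_left_mono)
    finally show ?thesis .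
  qed
  then show ?thesis unfolding lipball_bounded_def by blast
qed

lemma opnorm_diff_le_approx:
  assumes "lipball_bounded (\<lambda>f. \<mu> f - \<nu>1 f)" "lipball_bounded (\<lambda>f. \<mu> f - \<nu>2 f)"
  shows "opnorm (\<lambda>f. \<nu>1 f - \<nu>2 f) \<le> opnorm (\<lambda>f. \<mu> f - \<nu>1 f) + opnorm (\<lambda>f. \<mu> f - \<nu>2 f)"
proof (rule opnorm_le)
  fix f :: "'a \<Rightarrow> 'b" assume f: "f \<in> lipball"
  have "norm (\<nu>1 f - \<nu>2 f) \<le> norm (\<mu> f - \<nu>1 f) + norm (\<mu> f - \<nu>2 f)"
    by (metis norm_diff_triangle_le norm_minus_commute order_refl)
  also have "\<dots> \<le> opnorm (\<lambda>f. \<mu> f - \<nu>1 f) + opnorm (\<lambda>f. \<mu> f - \<nu>2 f)"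
    using norm_le_opnorm[OF assms(1) f] norm_le_opnorm[OF assms(2) f] by simp
  finally show "norm (\<nu>1 f - \<nu>2 f) \<le> \<dots>" .
qed

definition fspan_approx :: "(('a::real_normed_vector \<Rightarrow> 'b::real_normed_vector) \<Rightarrow> 'b) \<Rightarrow>
    (nat \<Rightarrow> ('a \<Rightarrow> 'b) \<Rightarrow> 'b) \<Rightarrow> bool" where
  "fspan_approx \<mu> s \<longleftrightarrow> (\<forall>n. s n \<in> fspan) \<and> (\<lambda>n. opnorm (\<lambda>f. \<mu> f - s n f)) \<longlonglongrightarrow> 0"

lemma FY_iff: "\<mu> \<in> FY \<longleftrightarrow> lip_op \<mu> \<and> (\<exists>s. fspan_approx \<mu> s)"
  unfolding FY_def fspan_approx_def by blast

context
  fixes y0 :: "'b::real_normed_vector"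
  assumes nontrivial: "y0 \<noteq> 0"
begin

lemma delta_comb_eq_imp_sum_eq:
  assumes "(delta_comb n \<alpha> xs :: ('a::real_normed_vector \<Rightarrow> 'b) \<Rightarrow> 'b) = delta_comb m \<beta> ys"
  shows "(\<Sum>i<n. \<alpha> i *\<^sub>R xs i) = (\<Sum>j<m. \<beta> j *\<^sub>R ys j)"
  using delta_comb_diff_norm_attained[OF nontrivial, of n \<alpha> xs m \<beta> ys] assms by auto

lemma beta0_delta_comb:
  "beta0 (delta_comb n \<alpha> xs :: ('a::real_normed_vector \<Rightarrow> 'b) \<Rightarrow> 'b) = (\<Sum>i<n. \<alpha> i *\<^sub>R xs i)"
  unfolding beta0_def delta_comb_def[symmetric]
  by (rule the_equality) (auto dest: delta_comb_eq_imp_sum_eq)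

lemma norm_beta0_diff_le:
  assumes "\<nu>1 \<in> fspan" "\<nu>2 \<in> fspan"
  shows "norm (beta0 \<nu>1 - beta0 \<nu>2) \<le> opnorm (\<lambda>f::'a::real_normed_vector \<Rightarrow> 'b. \<nu>1 f - \<nu>2 f)"
proof -
  obtain n \<alpha> xs m \<beta> ys where \<nu>: "\<nu>1 = delta_comb n \<alpha> xs" "\<nu>2 = delta_comb m \<beta> ys"
    using assms by (auto simp: fspan_iff_delta_comb)
  obtain f :: "'a \<Rightarrow> 'b" where f: "f \<in> lipball"
    "norm (\<nu>1 f - \<nu>2 f) = norm ((\<Sum>i<n. \<alpha> i *\<^sub>R xs i) - (\<Sum>j<m. \<beta> j *\<^sub>R ys j))"
    using delta_comb_diff_norm_attained[OF nontrivial] unfolding \<nu> by blast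
  have "norm (beta0 \<nu>1 - beta0 \<nu>2) = norm (\<nu>1 f - \<nu>2 f)"
    using f(2) by (simp add: \<nu> beta0_delta_comb)
  also have "\<dots> \<le> opnorm (\<lambda>f. \<nu>1 f - \<nu>2 f)"
    using assms f(1) by (intro norm_le_opnorm lipball_bounded_diff fspan_lipball_bounded)
  finally show ?thesis .
qed

lemma norm_beta0_le:
  assumes "\<nu> \<in> fspan"
  shows "norm (beta0 \<nu>) \<le> opnorm (\<nu> :: ('a::real_normed_vector \<Rightarrow> 'b) \<Rightarrow> 'b)"
proof -
  define zero :: "('a \<Rightarrow> 'b) \<Rightarrow> 'b" where "zero = delta_comb 0 (\<lambda>_. 0) (\<lambda>_. 0)"
  have "zero \<in> fspan" unfolding zero_def fspan_iff_delta_comb by blast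
  moreover have "beta0 zero = 0" "(\<lambda>f. \<nu> f - zero f) = \<nu>"
    unfolding zero_def beta0_delta_comb by (auto simp: delta_comb_def)
  ultimately show ?thesis using norm_beta0_diff_le[OF assms, of zero] by simp
qed

lemma norm_beta0_diff_le_approx:
  assumes "lip_op \<mu>" "\<nu>1 \<in> fspan" "\<nu>2 \<in> fspan"
  shows "norm (beta0 \<nu>1 - beta0 \<nu>2) \<le>
    opnorm (\<lambda>f::'a::real_normed_vector \<Rightarrow> 'b. \<mu> f - \<nu>1 f) + opnorm (\<lambda>f. \<mu> f - \<nu>2 f)"
proof -
  have "lipball_bounded (\<lambda>f. \<mu> f - \<nu>1 f)" "lipball_bounded (\<lambda>f. \<mu> f - \<nu>2 f)"
    using assms by (blast intro: lipball_bounded_diff lip_op_lipball_bounded fspan_lipball_bounded)+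
  then show ?thesis by (rule order_trans[OF norm_beta0_diff_le[OF assms(2,3)] opnorm_diff_le_approx])
qed

lemma Cauchy_beta0_approx:
  assumes "lip_op \<mu>" "fspan_approx \<mu> s"
  shows "Cauchy (\<lambda>n. beta0 (s n :: ('a::real_normed_vector \<Rightarrow> 'b) \<Rightarrow> 'b))"
proof (rule metric_CauchyI)
  fix e :: real assume "0 < e"
  define d where "d n = opnorm (\<lambda>f. \<mu> f - s n f)" for n
  have "d \<longlonglongrightarrow> 0" using assms(2) unfolding fspan_approx_def d_def[abs_def] by blast
  then obtain M where M: "\<And>n. n \<ge> M \<Longrightarrow> \<bar>d n\<bar> < e / 2"
    using LIMSEQ_D[of d 0 "e / 2"] \<open>0 < e\<close> by auto
  have "dist (beta0 (s m)) (beta0 (s n)) < e" if "m \<ge> M" "n \<ge> M" for m n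
    using norm_beta0_diff_le_approx[OF assms(1), of "s m" "s n"] assms(2) M[OF that(1)] M[OF that(2)]
    by (simp add: fspan_approx_def dist_norm d_def)
  then show "\<exists>M. \<forall>m\<ge>M. \<forall>n\<ge>M. dist (beta0 (s m)) (beta0 (s n)) < e" by blast
qed

lemma beta0_approx_diff_tendsto_0:
  assumes "lip_op \<mu>" "fspan_approx \<mu> s" "fspan_approx \<mu> s'"
  shows "(\<lambda>n. beta0 (s n :: ('a::real_normed_vector \<Rightarrow> 'b) \<Rightarrow> 'b) - beta0 (s' n)) \<longlonglongrightarrow> 0"
proof (rule Lim_null_comparison)
  show "\<forall>\<^sub>F n in sequentially. norm (beta0 (s n) - beta0 (s' n)) \<le>
      opnorm (\<lambda>f. \<mu> f - s n f) + opnorm (\<lambda>f. \<mu> f - s' n f)"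
    using norm_beta0_diff_le_approx[OF assms(1)] assms(2,3) by (simp add: fspan_approx_def)
  show "(\<lambda>n. opnorm (\<lambda>f. \<mu> f - s n f) + opnorm (\<lambda>f. \<mu> f - s' n f)) \<longlonglongrightarrow> 0"
    using tendsto_add[of _ 0 _ _ 0] assms(2,3) by (force simp: fspan_approx_def)
qed

lemma beta_tendsto:
  assumes "\<mu> \<in> FY" "fspan_approx \<mu> s"
  shows "(\<lambda>n. beta0 (s n :: ('a::banach \<Rightarrow> 'b) \<Rightarrow> 'b)) \<longlonglongrightarrow> beta \<mu>"
proof -
  have \<mu>: "lip_op \<mu>" using assms(1) by (simp add: FY_iff)
  obtain L where L: "(\<lambda>n. beta0 (s n)) \<longlonglongrightarrow> L"
    using Cauchy_beta0_approx[OF \<mu> assms(2)] by (auto simp: Cauchy_convergent_iff convergent_def)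
  have "\<forall>s'. fspan_approx \<mu> s' \<longrightarrow> (\<lambda>n. beta0 (s' n)) \<longlonglongrightarrow> L"
    using tendsto_diff[OF L beta0_approx_diff_tendsto_0[OF \<mu> assms(2)]] by simp
  then have "beta \<mu> = L"
    unfolding beta_def fspan_approx_def[symmetric]
    by (rule the_equality) (use assms(2) L LIMSEQ_unique in blast)
  then show ?thesis using L by simp
qed

lemma norm_beta_le:
  assumes "\<mu> \<in> (FY :: (('a::banach \<Rightarrow> 'b) \<Rightarrow> 'b) set)"
  shows "norm (beta \<mu>) \<le> opnorm \<mu>"
proof -
  obtain s where s: "fspan_approx \<mu> s" and \<mu>: "lip_op \<mu>" using assms by (auto simp: FY_iff)
  have "norm (beta0 (s n)) \<le> opnorm \<mu> + opnorm (\<lambda>f. \<mu> f - s n f)" for n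
  proof -
    have sn: "s n \<in> fspan" using s by (simp add: fspan_approx_def)
    have "opnorm (s n) \<le> opnorm \<mu> + opnorm (\<lambda>f. \<mu> f - s n f)"
    proof (rule opnorm_le)
      fix f :: "'a \<Rightarrow> 'b" assume f: "f \<in> lipball"
      have "norm (s n f) \<le> norm (\<mu> f) + norm (\<mu> f - s n f)"
        using norm_triangle_ineq4[of "\<mu> f" "\<mu> f - s n f"] by simp
      also have "\<dots> \<le> opnorm \<mu> + opnorm (\<lambda>f. \<mu> f - s n f)"
        using f sn \<mu> by (intro add_mono norm_le_opnorm lipball_bounded_diff lip_op_lipball_bounded
            fspan_lipball_bounded)
      finally show "norm (s n f) \<le> opnorm \<mu> + opnorm (\<lambda>f. \<mu> f - s n f)" .
    qed
    then show ?thesis using norm_beta0_le[OF sn] by simp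
  qed
  moreover have "(\<lambda>n. opnorm \<mu> + opnorm (\<lambda>f. \<mu> f - s n f)) \<longlonglongrightarrow> opnorm \<mu> + 0"
    using s by (intro tendsto_add) (auto simp: fspan_approx_def)
  ultimately show ?thesis
    using tendsto_norm[OF beta_tendsto[OF assms s]] by (intro LIMSEQ_le) auto
qed

lemma delta_in_FY: "(delta x :: ('a::banach \<Rightarrow> 'b) \<Rightarrow> 'b) \<in> FY"
  and beta_delta: "beta (delta x :: ('a \<Rightarrow> 'b) \<Rightarrow> 'b) = x"
proof -
  have delta_eq: "(delta x :: ('a \<Rightarrow> 'b) \<Rightarrow> 'b) = delta_comb 1 (\<lambda>_. 1) (\<lambda>_. x)"
    by (simp add: delta_comb_def)
  have approx: "fspan_approx (delta x) (\<lambda>_. delta x :: ('a \<Rightarrow> 'b) \<Rightarrow> 'b)"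
    unfolding fspan_approx_def fspan_iff_delta_comb using delta_eq by (auto simp: opnorm_zero)
  then show FY: "(delta x :: ('a \<Rightarrow> 'b) \<Rightarrow> 'b) \<in> FY" using lip_op_delta by (auto simp: FY_iff)
  have "beta0 (delta x :: ('a \<Rightarrow> 'b) \<Rightarrow> 'b) = x" unfolding delta_eq beta0_delta_comb by simp
  then show "beta (delta x :: ('a \<Rightarrow> 'b) \<Rightarrow> 'b) = x"
    using beta_tendsto[OF FY approx] by (simp add: LIMSEQ_const_iff)
qed

end

lemma norm_blinfun_eq_SUP_cball:
  fixes \<phi> :: "'a::real_normed_vector \<Rightarrow>\<^sub>L 'c::real_normed_vector"
  shows "norm \<phi> = (SUP x\<in>cball 0 1. norm (\<phi> x))"
proof (rule antisym)
  have le: "norm (\<phi> x) \<le> norm \<phi>" if "x \<in> cball 0 1" for x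
    using norm_blinfun[of \<phi> x] mult_left_le[of "norm x" "norm \<phi>"] that by simp
  then have bdd: "bdd_above ((\<lambda>x. norm (\<phi> x)) ` cball 0 1)" by (rule bdd_aboveI2)
  show "norm \<phi> \<le> (SUP x\<in>cball 0 1. norm (\<phi> x))"
  proof (rule norm_blinfun_bound)
    show "0 \<le> (SUP x\<in>cball 0 1. norm (\<phi> x))"
      using cSUP_upper[OF _ bdd, of 0] by simp
    fix x :: 'a
    show "norm (\<phi> x) \<le> (SUP x\<in>cball 0 1. norm (\<phi> x)) * norm x"
    proof (cases "x = 0")
      case False
      have "norm (\<phi> ((1 / norm x) *\<^sub>R x)) \<le> (SUP x\<in>cball 0 1. norm (\<phi> x))"
        using False by (intro cSUP_upper[OF _ bdd]) simp
      then show ?thesis using False by (simp add: blinfun.scaleR_right field_simps)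
    qed simp
  qed
  show "(SUP x\<in>cball 0 1. norm (\<phi> x)) \<le> norm \<phi>" using le by (intro cSUP_least) auto
qed

theorem mainTheorem7:
  fixes \<phi> :: "'a::banach \<Rightarrow>\<^sub>L real"
  assumes "\<exists>y::'b::banach. y \<noteq> 0"
  shows "(SUP \<mu>\<in>{\<mu>\<in>(FY :: (('a \<Rightarrow> 'b) \<Rightarrow> 'b) set). opnorm \<mu> \<le> 1}. \<bar>\<phi> (beta \<mu>)\<bar>) = norm \<phi>"
proof -
  obtain y0 :: 'b where y0: "y0 \<noteq> 0" using assms by blast
  define M where "M = {\<mu>\<in>(FY :: (('a \<Rightarrow> 'b) \<Rightarrow> 'b) set). opnorm \<mu> \<le> 1}"
  have "beta ` M = cball 0 1"
  proof (intro equalityI subsetI)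
    fix x assume "x \<in> beta ` M"
    then show "x \<in> cball 0 1" using norm_beta_le[OF y0] by (force simp: M_def)
  next
    fix x :: 'a assume "x \<in> cball 0 1"
    then show "x \<in> beta ` M"
      using delta_in_FY[OF y0, of x] opnorm_delta_le[of x, where 'b = 'b] beta_delta[OF y0, of x]
      by (intro image_eqI[of _ _ "delta x"]) (auto simp: M_def)
  qed
  have "(SUP \<mu>\<in>M. \<bar>\<phi> (beta \<mu>)\<bar>) = (SUP x\<in>beta ` M. \<bar>\<phi> x\<bar>)"
    by (simp only: image_image)
  also have "\<dots> = norm \<phi>"
    unfolding \<open>beta ` M = cball 0 1\<close> norm_blinfun_eq_SUP_cball by simp
  finally show ?thesis unfolding M_def .
qed

end
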